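(* Let $\mathbb{K}$ be a field of characteristic $0$ and $d\ge1$. If $f:\mathbb{K}^d\to\mathbb{K}$ belongs to a finite-dimensional $\mathbb{K}$-vector space $V$ of functions $\mathbb{K}^d\to\mathbb{K}$ such that $\tau_h(V)\subseteq V$ for all $h\in\mathbb{K}^d$ and $O_P(V)\subseteq V$ for all $P\in\mathrm{GL}(d,\mathbb{K})$, then $f$ is a polynomial; more precisely, $f=P(a_1(x),\dots,a_s(x))$ for some $P\in\mathbb{K}[x_1,\dots,x_s]$ and some additive functions $a_1,\dots,a_s:\mathbb{K}^d\to\mathbb{K}$.
   Context: For $g:\mathbb{K}^d\to\mathbb{K}$, $h\in\mathbb{K}^d$, $P\in\mathrm{GL}(d,\mathbb{K})$: $\tau_hg(x)=g(x+h)$ and $O_Pg(x)=g(Px)$. A function $a:\mathbb{K}^d\to\mathbb{K}$ is additive if $a(x+y)=a(x)+a(y)$ for all $x,y$. A (normal) polynomial $\mathbb{K}^d\to\mathbb{K}$ is an element of the $\mathbb{K}$-algebra of functions generated by the additive functions $\mathbb{K}^d\to\mathbb{K}$ and the constants. *)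

theory Defs
  imports "HOL-Analysis.Analysis"
begin

definition transl :: "'a::field ^ 'n \<Rightarrow> ('a ^ 'n \<Rightarrow> 'a) \<Rightarrow> ('a ^ 'n \<Rightarrow> 'a)" where
  "transl h g = (\<lambda>x. g (x + h))"

definition lin_change :: "'a::field ^ 'n ^ 'n \<Rightarrow> ('a ^ 'n \<Rightarrow> 'a) \<Rightarrow> ('a ^ 'n \<Rightarrow> 'a)" where
  "lin_change P g = (\<lambda>x. g (P *v x))"

definition additive_fun :: "('b::plus \<Rightarrow> 'a::plus) \<Rightarrow> bool" where
  "additive_fun a \<longleftrightarrow> (\<forall>x y. a (x + y) = a x + a y)"

inductive normal_poly :: "('b::plus \<Rightarrow> 'a::comm_ring_1) \<Rightarrow> bool" where
  np_const: "normal_poly (\<lambda>x. c)"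
| np_additive: "additive_fun a \<Longrightarrow> normal_poly a"
| np_add: "normal_poly p \<Longrightarrow> normal_poly q \<Longrightarrow> normal_poly (\<lambda>x. p x + q x)"
| np_mult: "normal_poly p \<Longrightarrow> normal_poly q \<Longrightarrow> normal_poly (\<lambda>x. p x * q x)"

definition fin_dim_fun_space :: "('b \<Rightarrow> 'a::field) set \<Rightarrow> bool" where
  "fin_dim_fun_space V \<longleftrightarrow>
     (\<exists>B. finite B \<and> V = {(\<lambda>x. \<Sum>b\<in>B. c b * b x) | c. True})"

end

theory Submission
  imports Defs "HOL-Library.Function_Algebras" "HOL-Algebra.Algebraic_Closure_Type"
begin

(* HOL-Algebra, needed for the algebraic closure, reuses these names. *)
hide_const (open) Polynomials.degree Polynomials.lead_coeff module.smult up_ring.coeff up_ring.monom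

(* The translations tau_y act on V, so every polynomial p acts as p(tau_y), and the p with
   p(tau_y) = 0 on V form an ideal with a generator mu. A dilation conjugates tau_y into
   tau_(c y), and tau_(n y) = tau_y^n, so mu divides mu(X^n) for every n >= 1: the roots of mu
   are roots of unity. Hence some (X^N - 1)^d annihilates, and dilating by 1/N shows
   (tau_y - 1)^d = 0 on V, with d bounded independently of y. By Newton's forward difference
   formula, n -> g (x + n y) is then a polynomial in n whose coefficients c_j(y) g lie in V and
   satisfy c_j(y1 + y2) = sum_l c_(j-l)(y1) c_l(y2) and c_j(2 y) = 2^j c_j(y). So c_1 is additive
   in y, and (2^j - 2) c_j(y) = sum_(0<l<j) c_(j-l)(y) c_l(y) shows by induction that the
   coordinates of c_j(y) g in a basis of V are normal polynomials in y. Finally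
   f y = sum_j (c_j(y) f) 0. *)

definition poly_transl :: "'a::comm_ring_1 poly \<Rightarrow> 'a ^ 'n \<Rightarrow> ('a ^ 'n \<Rightarrow> 'a) \<Rightarrow> 'a ^ 'n \<Rightarrow> 'a" where
  "poly_transl p h g x = (\<Sum>i\<le>degree p. coeff p i * g (x + of_nat i *s h))"

lemma poly_transl_eq_sum_atMost:
  "degree p \<le> N \<Longrightarrow> poly_transl p h g x = (\<Sum>i\<le>N. coeff p i * g (x + of_nat i *s h))"
  unfolding poly_transl_def by (rule sum.mono_neutral_left) (auto simp: coeff_eq_0)

lemma poly_transl_pCons: "poly_transl (pCons a p) h g x = a * g x + poly_transl p h g (x + h)"
proof -
  have shift: "x + of_nat (Suc i) *s h = (x + h) + of_nat i *s h" for i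
    by (simp add: vec_eq_iff algebra_simps)
  have "poly_transl (pCons a p) h g x
      = (\<Sum>i\<le>Suc (degree p). coeff (pCons a p) i * g (x + of_nat i *s h))"
    by (rule poly_transl_eq_sum_atMost) (simp add: degree_pCons_le)
  also have "\<dots> = a * g x + (\<Sum>i\<le>degree p. coeff p i * g (x + of_nat (Suc i) *s h))"
    by (subst sum.atMost_Suc_shift) simp
  also have "\<dots> = a * g x + poly_transl p h g (x + h)"
    by (simp only: shift poly_transl_def)
  finally show ?thesis .
qed

lemma poly_transl_0 [simp]: "poly_transl 0 h g = (\<lambda>x. 0)"
  by (simp add: poly_transl_def fun_eq_iff)

lemma poly_transl_add: "poly_transl (p + q) h g x = poly_transl p h g x + poly_transl q h g x"
proof -
  let ?N = "max (degree p) (degree q)"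
  have "poly_transl (p + q) h g x = (\<Sum>i\<le>?N. coeff (p + q) i * g (x + of_nat i *s h))"
    by (rule poly_transl_eq_sum_atMost) (simp add: degree_add_le)
  also have "\<dots> = poly_transl p h g x + poly_transl q h g x"
    by (simp add: poly_transl_eq_sum_atMost[of _ ?N] distrib_right sum.distrib)
  finally show ?thesis .
qed

lemma poly_transl_smult: "poly_transl (smult c p) h g x = c * poly_transl p h g x"
proof -
  have "poly_transl (smult c p) h g x = (\<Sum>i\<le>degree p. coeff (smult c p) i * g (x + of_nat i *s h))"
    by (rule poly_transl_eq_sum_atMost) (rule degree_smult_le)
  then show ?thesis by (simp add: poly_transl_def sum_distrib_left mult.assoc)
qed

lemma poly_transl_diff: "poly_transl (p - q) h g x = poly_transl p h g x - poly_transl q h g x"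
proof -
  have "p - q = p + smult (-1) q" by simp
  then show ?thesis by (simp only: poly_transl_add poly_transl_smult) simp
qed

lemma poly_transl_sum: "poly_transl (\<Sum>i\<in>I. p i) h g x = (\<Sum>i\<in>I. poly_transl (p i) h g x)"
  by (induction I rule: infinite_finite_induct) (auto simp: poly_transl_add)

lemma poly_transl_monom: "poly_transl (monom c n) h g x = c * g (x + of_nat n *s h)"
proof -
  have "poly_transl (monom c n) h g x = (\<Sum>i\<le>n. if i = n then c * g (x + of_nat n *s h) else 0)"
    by (subst poly_transl_eq_sum_atMost[OF degree_monom_le], rule sum.cong) (auto simp: coeff_monom)
  then show ?thesis by simp
qed

lemma poly_transl_mult: "poly_transl (p * q) h g = poly_transl p h (poly_transl q h g)"
proof (induction p)
  case (pCons a p)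
  have "poly_transl (pCons a p * q) h g x = poly_transl (pCons a p) h (poly_transl q h g) x" for x
    by (simp add: poly_transl_add poly_transl_smult poly_transl_pCons pCons.IH)
  then show ?case
    by (rule ext)
qed simp

lemma poly_transl_lincomb:
  "poly_transl p h (\<lambda>x. \<Sum>i\<in>I. c i * G i x) x = (\<Sum>i\<in>I. c i * poly_transl p h (G i) x)"
  by (simp add: poly_transl_def sum_distrib_left sum.swap[of _ I] mult.left_commute)

lemma poly_transl_zero_fun [simp]: "poly_transl p h (\<lambda>x. 0) = (\<lambda>x. 0)"
  by (simp add: poly_transl_def fun_eq_iff)

lemma poly_transl_pcompose_monom:
  "poly_transl (p \<circ>\<^sub>p monom 1 n) h g = poly_transl p (of_nat n *s h) g"
proof (induction p)
  case (pCons a p)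
  have "poly_transl (pCons a p \<circ>\<^sub>p monom 1 n) h g x = poly_transl (pCons a p) (of_nat n *s h) g x"
    for x
    by (simp add: pcompose_pCons poly_transl_add poly_transl_mult poly_transl_monom
        poly_transl_pCons pCons.IH)
  then show ?case
    by (rule ext)
qed simp

lemma poly_transl_dilate:
  "poly_transl p h (\<lambda>x. g (c *s x)) x = poly_transl p (c *s h) g (c *s x)"
proof -
  have "c *s (x + of_nat i *s h) = c *s x + of_nat i *s (c *s h)" for i
    by (simp add: vec_eq_iff algebra_simps)
  then show ?thesis by (simp add: poly_transl_def)
qed

definition fwd_diff :: "nat \<Rightarrow> 'a::comm_ring_1 ^ 'n \<Rightarrow> ('a ^ 'n \<Rightarrow> 'a) \<Rightarrow> 'a ^ 'n \<Rightarrow> 'a" where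
  "fwd_diff k h g = poly_transl ([:-1, 1:] ^ k) h g"

lemma newton_forward_difference:
  "g (x + of_nat n *s h) = (\<Sum>k\<le>n. of_nat (n choose k) * fwd_diff k h g x)"
proof -
  have "monom (1::'a) n = ([:-1, 1:] + 1) ^ n"
    by (simp add: monom_altdef one_pCons)
  also have "\<dots> = (\<Sum>k\<le>n. smult (of_nat (n choose k)) ([:-1, 1:] ^ k))"
    by (simp add: binomial_ring of_nat_poly)
  finally have "poly_transl (monom 1 n) h g x = poly_transl (\<Sum>k\<le>n. smult (of_nat (n choose k)) ([:-1, 1:] ^ k)) h g x"
    by simp
  then show ?thesis
    by (simp add: poly_transl_monom poly_transl_sum poly_transl_smult fwd_diff_def)
qed

definition binomial_poly :: "nat \<Rightarrow> 'a::field_char_0 poly" where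
  "binomial_poly k = smult (inverse (fact k)) (\<Prod>i<k. [:- of_nat i, 1:])"

lemma poly_binomial_poly_of_nat: "poly (binomial_poly k) (of_nat n) = of_nat (n choose k)"
proof -
  have "poly (binomial_poly k) (of_nat n) = (\<Prod>i<k. of_nat n - of_nat i) / fact k"
    by (simp add: binomial_poly_def poly_prod divide_inverse mult.commute)
  also have "\<dots> = of_nat n gchoose k"
    by (simp add: gbinomial_prod_rev atLeast0LessThan)
  finally show ?thesis
    by (simp add: binomial_gbinomial)
qed

lemma degree_binomial_poly: "degree (binomial_poly k) \<le> k"
proof -
  have "degree (\<Prod>i<k. [:- of_nat i, 1::'a:]) \<le> (\<Sum>i<k. degree [:- of_nat i, 1::'a:])"
    using degree_prod_sum_le[of "{..<k}" "\<lambda>i. [:- of_nat i, 1::'a:]"] by (simp add: o_def)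
  then show ?thesis
    by (simp add: binomial_poly_def)
qed

lemma poly_eqI_of_nat:
  fixes p q :: "'a::{idom, ring_char_0} poly"
  assumes "\<And>n. poly p (of_nat n) = poly q (of_nat n)"
  shows "p = q"
proof (rule ccontr)
  assume "p \<noteq> q"
  then have "finite {x. poly (p - q) x = 0}"
    by (intro poly_roots_finite) simp
  moreover have "range (of_nat :: nat \<Rightarrow> 'a) \<subseteq> {x. poly (p - q) x = 0}"
    using assms by auto
  ultimately have "finite (range (of_nat :: nat \<Rightarrow> 'a))"
    by (rule finite_subset[rotated])
  then show False
    using finite_imageD[OF _ inj_of_nat] by simp
qed

lemma pcompose_power_left: "(p ^ n) \<circ>\<^sub>p q = (p \<circ>\<^sub>p q) ^ n"
  by (induction n) (simp_all add: pcompose_mult pcompose_1)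

lemma pcompose_X_minus_1: "[:-1, 1:] \<circ>\<^sub>p q = q - (1 :: 'a::comm_ring_1 poly)"
  by (simp add: pcompose_pCons poly_eq_iff coeff_pCons split: nat.splits)

lemma dvd_if_min_degree_in_poly_ideal:
  fixes I :: "'a::field poly set"
  assumes diff: "\<And>p q. p \<in> I \<Longrightarrow> q \<in> I \<Longrightarrow> p - q \<in> I"
    and mult: "\<And>p q. q \<in> I \<Longrightarrow> p * q \<in> I"
    and \<mu>: "\<mu> \<in> I" "\<mu> \<noteq> 0"
    and min: "\<And>q. q \<in> I \<Longrightarrow> q \<noteq> 0 \<Longrightarrow> degree \<mu> \<le> degree q"
    and q: "q \<in> I"
  shows "\<mu> dvd q"
proof (rule ccontr)
  assume "\<not> \<mu> dvd q"
  then have r: "q mod \<mu> \<noteq> 0"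
    by (simp add: mod_eq_0_iff_dvd)
  have "q - q div \<mu> * \<mu> \<in> I"
    using diff mult q \<mu>(1) by blast
  then have "degree \<mu> \<le> degree (q mod \<mu>)"
    using min r by (simp add: minus_div_mult_eq_mod)
  with degree_mod_less'[OF \<mu>(2) r] show False
    by simp
qed

lemma root_of_unity_if_powers_finite:
  fixes a :: "'a::field"
  assumes "finite R" "a \<noteq> 0" "\<And>n. n \<ge> 1 \<Longrightarrow> a ^ n \<in> R"
  shows "\<exists>k\<ge>1. a ^ k = 1"
proof -
  have "(\<lambda>i. a ^ i) ` {1..} \<subseteq> R"
    using assms(3) by auto
  then have "finite ((\<lambda>i. a ^ i) ` {1..})"
    using assms(1) by (rule finite_subset)
  then have "\<not> inj_on (\<lambda>i. a ^ i) {1..}"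
    using finite_imageD infinite_Ici by blast
  then obtain i j where "1 \<le> i" "i < j" "a ^ i = a ^ j"
    unfolding inj_on_def by (auto elim!: linorder_neqE_nat)
  moreover have "a ^ j = a ^ i * a ^ (j - i)"
    using \<open>i < j\<close> by (simp flip: power_add)
  ultimately show ?thesis
    using assms(2) by (intro exI[of _ "j - i"]) simp
qed

lemma prod_mset_dvd_power:
  "(\<And>x. x \<in># A \<Longrightarrow> f x dvd q) \<Longrightarrow> (\<Prod>x\<in>#A. f x) dvd q ^ size A"
  by (induction A) (simp_all add: mult_dvd_mono)

lemma alg_closed_dvd_power_degree:
  fixes p q :: "'a::alg_closed_field poly"
  assumes "p \<noteq> 0" and roots: "\<And>x. poly p x = 0 \<Longrightarrow> poly q x = 0"
  shows "p dvd q ^ degree p"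
proof -
  obtain A where A: "size A = degree p" "p = smult (lead_coeff p) (\<Prod>x\<in>#A. [:-x, 1:])"
    using alg_closed_imp_factorization[OF assms(1)] by blast
  have "(\<Prod>x\<in>#A. [:-x, 1:]) dvd q ^ size A"
  proof (rule prod_mset_dvd_power)
    fix x assume "x \<in># A"
    then have "[:-x, 1:] dvd p"
      by (subst A(2)) (intro dvd_smult dvd_prod_mset; simp)
    then show "[:-x, 1:] dvd q"
      using roots by (simp add: poly_eq_0_iff_dvd)
  qed
  then have "smult (lead_coeff p) (\<Prod>x\<in>#A. [:-x, 1:]) dvd q ^ degree p"
    using A(1) assms(1) by (simp add: smult_dvd_iff)
  with A(2)[symmetric] show ?thesis
    by (simp only:)
qed

lemma map_poly_to_ac_add [simp]: "map_poly to_ac (p + q) = map_poly to_ac p + map_poly to_ac q"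
  by (rule poly_eqI) (simp add: coeff_map_poly)

lemma map_poly_to_ac_diff [simp]: "map_poly to_ac (p - q) = map_poly to_ac p - map_poly to_ac q"
  by (rule poly_eqI) (simp add: coeff_map_poly)

lemma map_poly_to_ac_mult [simp]: "map_poly to_ac (p * q) = map_poly to_ac p * map_poly to_ac q"
  by (rule poly_eqI) (simp add: coeff_map_poly coeff_mult to_ac_sum)

lemma map_poly_to_ac_power [simp]: "map_poly to_ac (p ^ n) = map_poly to_ac p ^ n"
  by (induction n) simp_all

lemma map_poly_to_ac_pcompose [simp]:
  "map_poly to_ac (p \<circ>\<^sub>p q) = map_poly to_ac p \<circ>\<^sub>p map_poly to_ac q"
  by (induction p) (simp_all add: pcompose_pCons map_poly_pCons)

lemma degree_map_poly_to_ac [simp]: "degree (map_poly to_ac p) = degree p"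
  by (rule degree_map_poly) simp

lemma dvd_if_map_poly_to_ac_dvd:
  fixes p q :: "'a::field poly"
  assumes dvd: "map_poly to_ac p dvd map_poly to_ac q" and "p \<noteq> 0"
  shows "p dvd q"
proof (rule ccontr)
  define r where "r = q mod p"
  assume "\<not> p dvd q"
  then have "r \<noteq> 0"
    by (simp add: r_def mod_eq_0_iff_dvd)
  then have "map_poly to_ac r \<noteq> 0"
    by (simp add: map_poly_eq_0_iff)
  moreover have "r = q - p * (q div p)"
    by (simp add: r_def minus_mult_div_eq_mod)
  then have "map_poly to_ac p dvd map_poly to_ac r"
    using dvd by simp
  ultimately have "degree p \<le> degree r"
    using dvd_imp_degree_le by (metis degree_map_poly_to_ac)
  moreover have "degree r < degree p"
    using degree_mod_less'[OF \<open>p \<noteq> 0\<close>, of q] \<open>r \<noteq> 0\<close> by (simp add: r_def)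
  ultimately show False
    by simp
qed

lemma dvd_power_monom_minus_one_if_dvd_pcompose_monom:
  fixes \<mu> :: "'a::field poly"
  assumes \<mu>: "\<mu> \<noteq> 0" "poly \<mu> 0 \<noteq> 0"
    and dvd: "\<And>n. n \<ge> 1 \<Longrightarrow> \<mu> dvd \<mu> \<circ>\<^sub>p monom 1 n"
  shows "\<exists>N\<ge>1. \<mu> dvd (monom 1 N - 1) ^ degree \<mu>"
proof -
  define m where "m = map_poly to_ac \<mu>"
  define R where "R = {a. poly m a = 0}"
  have "m \<noteq> 0"
    using \<mu>(1) by (simp add: m_def map_poly_eq_0_iff)
  then have "finite R"
    unfolding R_def by (rule poly_roots_finite)
  have nonzero: "a \<noteq> 0" if "a \<in> R" for a
    using that \<mu>(2) by (auto simp: R_def m_def poly_0_coeff_0 coeff_map_poly)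
  have power_closed: "a ^ n \<in> R" if a: "a \<in> R" and n: "n \<ge> 1" for a n
  proof -
    obtain w where w: "\<mu> \<circ>\<^sub>p monom 1 n = \<mu> * w"
      using dvd[OF n] by (elim dvdE)
    have "poly m (a ^ n) = poly (map_poly to_ac (\<mu> \<circ>\<^sub>p monom 1 n)) a"
      by (simp add: m_def poly_pcompose map_poly_monom poly_monom)
    also have "\<dots> = poly m a * poly (map_poly to_ac w) a"
      by (simp add: w m_def)
    finally show ?thesis
      using a by (simp add: R_def)
  qed
  have "\<forall>a\<in>R. \<exists>k\<ge>1. a ^ k = 1"
    using root_of_unity_if_powers_finite[OF \<open>finite R\<close> nonzero power_closed] by blast
  then obtain k where k: "\<And>a. a \<in> R \<Longrightarrow> k a \<ge> 1 \<and> a ^ k a = 1"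
    by (metis (no_types))
  define N where "N = (\<Prod>a\<in>R. k a)"
  have "N \<ge> 1"
    unfolding N_def using k by (intro prod_ge_1) auto
  have "a ^ N = 1" if a: "a \<in> R" for a
  proof -
    obtain t where "N = k a * t"
      using dvd_prodI[OF \<open>finite R\<close> a, of k] by (auto simp: N_def elim: dvdE)
    then show ?thesis
      using k[OF a] by (simp add: power_mult)
  qed
  then have "m dvd (monom 1 N - 1) ^ degree m"
    by (intro alg_closed_dvd_power_degree \<open>m \<noteq> 0\<close>) (simp add: R_def poly_monom)
  then have "map_poly to_ac \<mu> dvd map_poly to_ac ((monom 1 N - 1) ^ degree \<mu>)"
    by (simp add: m_def map_poly_monom)
  then show ?thesis
    using dvd_if_map_poly_to_ac_dvd \<mu>(1) \<open>N \<ge> 1\<close> by blast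
qed

interpretation fun_space: vector_space "\<lambda>(c::'a::field) (f::'b \<Rightarrow> 'a) x. c * f x"
  by unfold_locales (auto simp: fun_eq_iff algebra_simps)

lemma sum_fun_eq: "(\<Sum>i\<in>I. f i) = (\<lambda>x. \<Sum>i\<in>I. f i x)"
  by (induction I rule: infinite_finite_induct) auto

lemma (in vector_space) nontrivial_relation_exists:
  assumes "finite B" and "\<And>i. i \<le> card B \<Longrightarrow> v i \<in> span B"
  shows "\<exists>c :: nat \<Rightarrow> 'a. (\<exists>i\<le>card B. c i \<noteq> 0) \<and> (\<Sum>i\<le>card B. scale (c i) (v i)) = 0"
proof (cases "inj_on v {..card B}")
  case True
  have "card (v ` {..card B}) = Suc (card B)"
    using True by (simp add: card_image)
  then have "dependent (v ` {..card B})"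
    using independent_span_bound[OF assms(1), of "v ` {..card B}"] assms(2) by auto
  then obtain u where "\<exists>w\<in>v ` {..card B}. u w \<noteq> 0" "(\<Sum>w\<in>v ` {..card B}. scale (u w) w) = 0"
    using dependent_finite by auto
  with True show ?thesis
    by (intro exI[of _ "u \<circ> v"]) (auto simp: sum.reindex)
next
  case False
  then obtain i j where ij: "i \<le> card B" "j \<le> card B" "i \<noteq> j" "v i = v j"
    unfolding inj_on_def by auto
  define c :: "nat \<Rightarrow> 'a" where "c k = (if k = i then 1 else if k = j then -1 else 0)" for k
  have "(\<Sum>k\<le>card B. scale (c k) (v k)) = (\<Sum>k\<in>{i, j}. scale (c k) (v k))"
    using ij by (intro sum.mono_neutral_right) (auto simp: c_def)
  also have "\<dots> = 0"
    using ij by (simp add: c_def)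
  finally show ?thesis
    using ij(1) by (intro exI[of _ c]) (auto simp: c_def)
qed

lemma normal_poly_sum:
  "finite I \<Longrightarrow> (\<And>i. i \<in> I \<Longrightarrow> normal_poly (F i)) \<Longrightarrow> normal_poly (\<lambda>x. \<Sum>i\<in>I. F i x)"
  by (induction I rule: finite_induct) (simp_all add: np_const np_add)

lemma fin_dim_fun_space_imp_basis:
  assumes "fin_dim_fun_space V"
  obtains B where "finite B" "fun_space.independent B" "fun_space.span B = V"
proof -
  obtain S where S: "finite S" "V = {(\<lambda>x. \<Sum>b\<in>S. c b * b x) | c. True}"
    using assms unfolding fin_dim_fun_space_def by blast
  then have V: "V = fun_space.span S"
    by (auto simp: fun_space.span_finite sum_fun_eq)
  obtain B where B: "B \<subseteq> S" "fun_space.independent B" "S \<subseteq> fun_space.span B"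
    by (rule fun_space.maximal_independent_subset)
  have "fun_space.span B = V"
  proof
    show "fun_space.span B \<subseteq> V"
      using B(1) V by (simp add: fun_space.span_mono)
    show "V \<subseteq> fun_space.span B"
      using B(3) V by (simp add: fun_space.span_minimal fun_space.subspace_span)
  qed
  with B(1,2) S(1) show thesis
    using that finite_subset by blast
qed

lemma sum_delta_mult:
  "(\<Sum>j\<in>(UNIV :: 'n::finite set). (if i = j then c else 0) * y j) = c * (y i :: 'a::semiring_1)"
proof -
  have "(\<lambda>j. (if i = j then c else 0) * y j) = (\<lambda>j. if i = j then c * y j else 0)"
    by auto
  then show ?thesis
    by (simp only:) (simp add: sum.delta)
qed

lemma matrix_vector_mult_mat: "mat c *v x = c *s (x :: 'a::semiring_1 ^ 'n)"
  by (simp add: vec_eq_iff matrix_vector_mult_def mat_def sum_delta_mult)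

lemma invertible_mat: "(c :: 'a::field) \<noteq> 0 \<Longrightarrow> invertible (mat c :: 'a ^ 'n ^ 'n)"
  unfolding invertible_def
  by (rule exI[of _ "mat (inverse c)"])
    (simp add: vec_eq_iff matrix_matrix_mult_def mat_def sum_delta_mult)

locale transl_dilation_invariant =
  fixes V :: "('a::field_char_0 ^ 'n \<Rightarrow> 'a) set" and B :: "('a ^ 'n \<Rightarrow> 'a) set"
  assumes finite_B: "finite B" and independent_B: "fun_space.independent B"
    and span_B: "fun_space.span B = V"
    and transl_closed: "\<And>h g. g \<in> V \<Longrightarrow> (\<lambda>x. g (x + h)) \<in> V"
    and dilation_closed: "\<And>c g. c \<noteq> 0 \<Longrightarrow> g \<in> V \<Longrightarrow> (\<lambda>x. g (c *s x)) \<in> V"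
begin

lemma basis_in_V: "b \<in> B \<Longrightarrow> b \<in> V"
  using fun_space.span_base span_B by blast

lemma lincomb_in_V:
  assumes "\<And>i. i \<in> I \<Longrightarrow> G i \<in> V"
  shows "(\<lambda>x. \<Sum>i\<in>I. c i * G i x) \<in> V"
proof -
  from assms have "(\<Sum>i\<in>I. (\<lambda>x. c i * G i x)) \<in> fun_space.span B"
    using span_B by (intro fun_space.span_sum fun_space.span_scale) auto
  then show ?thesis
    by (simp add: span_B sum_fun_eq)
qed

lemma scale_in_V: "g \<in> V \<Longrightarrow> (\<lambda>x. c * g x) \<in> V"
  using fun_space.span_scale span_B by blast

lemma poly_transl_in_V: "g \<in> V \<Longrightarrow> poly_transl p h g \<in> V"
  unfolding poly_transl_def[abs_def] by (intro lincomb_in_V transl_closed)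

definition annihilator :: "'a ^ 'n \<Rightarrow> 'a poly set" where
  "annihilator h = {p. \<forall>g\<in>V. poly_transl p h g = (\<lambda>x. 0)}"

lemma annihilator_mult: "q \<in> annihilator h \<Longrightarrow> p * q \<in> annihilator h"
  by (simp add: annihilator_def poly_transl_mult)

lemma annihilator_diff: "p \<in> annihilator h \<Longrightarrow> q \<in> annihilator h \<Longrightarrow> p - q \<in> annihilator h"
  by (simp add: annihilator_def fun_eq_iff poly_transl_diff)

lemma annihilator_pCons_0:
  assumes "pCons 0 p \<in> annihilator h"
  shows "p \<in> annihilator h"
  unfolding annihilator_def
proof (intro CollectI ballI ext)
  fix g x assume "g \<in> V"
  with assms have "poly_transl (pCons 0 p) h g (x - h) = 0"
    by (simp add: annihilator_def)
  then show "poly_transl p h g x = 0"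
    by (simp add: poly_transl_pCons)
qed

lemma annihilator_dilate:
  assumes "c \<noteq> 0" "p \<in> annihilator h"
  shows "p \<in> annihilator (c *s h)"
  unfolding annihilator_def
proof (intro CollectI ballI ext)
  fix g y assume "g \<in> V"
  then have "poly_transl p h (\<lambda>x. g (c *s x)) (inverse c *s y) = 0"
    using assms dilation_closed by (simp add: annihilator_def)
  then show "poly_transl p (c *s h) g y = 0"
    using assms(1) by (simp add: poly_transl_dilate vector_smult_assoc)
qed

lemma pcompose_monom_in_annihilator_iff:
  assumes "n \<ge> 1"
  shows "p \<circ>\<^sub>p monom 1 n \<in> annihilator h \<longleftrightarrow> p \<in> annihilator h"
proof -
  have "of_nat n \<noteq> (0::'a)"
    using assms by simp
  have "p \<in> annihilator (of_nat n *s h) \<longleftrightarrow> p \<in> annihilator h"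
  proof
    assume "p \<in> annihilator (of_nat n *s h)"
    from annihilator_dilate[OF _ this, of "inverse (of_nat n)"] \<open>of_nat n \<noteq> 0\<close>
    show "p \<in> annihilator h"
      by (simp add: vector_smult_assoc)
  qed (rule annihilator_dilate[OF \<open>of_nat n \<noteq> 0\<close>])
  then show ?thesis
    by (simp add: annihilator_def poly_transl_pcompose_monom)
qed

lemma annihilator_of_elem_exists:
  assumes "g \<in> V"
  shows "\<exists>p. p \<noteq> 0 \<and> degree p \<le> card B \<and> poly_transl p h g = (\<lambda>x. 0)"
proof -
  obtain c where c: "\<exists>i\<le>card B. c i \<noteq> 0"
    and rel: "(\<Sum>i\<le>card B. (\<lambda>x. c i * g (x + of_nat i *s h))) = 0"
    using fun_space.nontrivial_relation_exists[OF finite_B, of "\<lambda>i x. g (x + of_nat i *s h)"]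
      transl_closed[OF assms] span_B by auto
  define p where "p = (\<Sum>i\<le>card B. monom (c i) i)"
  have "coeff p i = c i" if "i \<le> card B" for i
    using that by (simp add: p_def coeff_sum coeff_monom)
  then have "p \<noteq> 0"
    using c by auto
  moreover have "degree p \<le> card B"
    unfolding p_def by (intro degree_sum_le) (auto intro: order.trans[OF degree_monom_le])
  moreover have "poly_transl p h g = (\<lambda>x. 0)"
    using rel by (simp add: p_def fun_eq_iff poly_transl_sum poly_transl_monom sum_fun_eq)
  ultimately show ?thesis
    by blast
qed

lemma annihilator_exists: "\<exists>p\<in>annihilator h. p \<noteq> 0 \<and> degree p \<le> card B * card B"
proof -
  have "\<forall>b\<in>B. \<exists>p. p \<noteq> 0 \<and> degree p \<le> card B \<and> poly_transl p h b = (\<lambda>x. 0)"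
    using annihilator_of_elem_exists basis_in_V by blast
  then obtain q where q: "\<And>b. b \<in> B \<Longrightarrow>
      q b \<noteq> 0 \<and> degree (q b) \<le> card B \<and> poly_transl (q b) h b = (\<lambda>x. 0)"
    by (auto dest!: bchoice)
  define p where "p = (\<Prod>b\<in>B. q b)"
  have "p \<noteq> 0"
    using q finite_B by (simp add: p_def)
  moreover have "degree p \<le> card B * card B"
  proof -
    have "degree p \<le> (\<Sum>b\<in>B. degree (q b))"
      unfolding p_def using degree_prod_sum_le[OF finite_B, of q] by (simp add: o_def)
    also have "\<dots> \<le> card B * card B"
      using sum_bounded_above[of B "\<lambda>b. degree (q b)" "card B"] q by auto
    finally show ?thesis .
  qed
  moreover have "p \<in> annihilator h"
    unfolding annihilator_def
  proof (intro CollectI ballI ext)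
    fix g x assume "g \<in> V"
    then obtain u where u: "g = (\<lambda>x. \<Sum>b\<in>B. u b * b x)"
      using fun_space.span_finite[OF finite_B] span_B by (auto simp: sum_fun_eq)
    have "poly_transl p h b = (\<lambda>x. 0)" if "b \<in> B" for b
    proof -
      have "p = (\<Prod>b'\<in>B - {b}. q b') * q b"
        unfolding p_def using prod.remove[OF finite_B that, of q] by (simp add: mult.commute)
      then show ?thesis
        using q[OF that] by (simp add: poly_transl_mult)
    qed
    then show "poly_transl p h g x = 0"
      by (simp add: u poly_transl_lincomb)
  qed
  ultimately show ?thesis
    by blast
qed

lemma annihilator_generator:
  obtains \<mu> where "\<mu> \<in> annihilator h" "\<mu> \<noteq> 0" "degree \<mu> \<le> card B * card B"
    "\<And>q. q \<in> annihilator h \<Longrightarrow> \<mu> dvd q"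
proof -
  obtain p where p: "p \<in> annihilator h" "p \<noteq> 0" "degree p \<le> card B * card B"
    using annihilator_exists by blast
  then obtain \<mu> where \<mu>: "\<mu> \<in> annihilator h" "\<mu> \<noteq> 0"
    and min: "\<And>q. q \<in> annihilator h \<Longrightarrow> q \<noteq> 0 \<Longrightarrow> degree \<mu> \<le> degree q"
    using ex_has_least_nat[of "\<lambda>p. p \<in> annihilator h \<and> p \<noteq> 0" p degree] by blast
  have "\<mu> dvd q" if "q \<in> annihilator h" for q
    using dvd_if_min_degree_in_poly_ideal[of "annihilator h", OF annihilator_diff annihilator_mult]
      \<mu> min that by blast
  moreover have "degree \<mu> \<le> card B * card B"
    using min[OF p(1,2)] p(3) by linarith
  ultimately show thesis
    using that \<mu> by blast
qed

lemma generator_poly_0_nonzero: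
  assumes "\<mu> \<in> annihilator h" "\<mu> \<noteq> 0" and gen: "\<And>q. q \<in> annihilator h \<Longrightarrow> \<mu> dvd q"
  shows "poly \<mu> 0 \<noteq> 0"
proof
  assume "poly \<mu> 0 = 0"
  obtain a \<nu> where \<nu>: "\<mu> = pCons a \<nu>"
    by (cases \<mu>)
  with \<open>poly \<mu> 0 = 0\<close> assms(2) have "\<mu> = pCons 0 \<nu>" "\<nu> \<noteq> 0"
    by auto
  with assms(1) have "\<mu> dvd \<nu>"
    using annihilator_pCons_0 gen by simp
  then have "degree \<mu> \<le> degree \<nu>"
    using \<open>\<nu> \<noteq> 0\<close> by (rule dvd_imp_degree_le)
  with \<open>\<mu> = pCons 0 \<nu>\<close> \<open>\<nu> \<noteq> 0\<close> show False
    by simp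
qed

lemma X_minus_1_power_in_annihilator: "[:-1, 1:] ^ (card B * card B) \<in> annihilator h"
proof -
  obtain \<mu> where \<mu>: "\<mu> \<in> annihilator h" "\<mu> \<noteq> 0" "degree \<mu> \<le> card B * card B"
    and gen: "\<And>q. q \<in> annihilator h \<Longrightarrow> \<mu> dvd q"
    using annihilator_generator[of h] by blast
  have "\<mu> dvd \<mu> \<circ>\<^sub>p monom 1 n" if "n \<ge> 1" for n
    using gen pcompose_monom_in_annihilator_iff[OF that] \<mu>(1) by blast
  then obtain N where N: "N \<ge> 1" "\<mu> dvd (monom 1 N - 1) ^ degree \<mu>"
    using dvd_power_monom_minus_one_if_dvd_pcompose_monom[OF \<mu>(2)]
      generator_poly_0_nonzero[OF \<mu>(1,2) gen] by blast
  then have "(monom 1 N - 1) ^ degree \<mu> \<in> annihilator h"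
    using annihilator_mult[OF \<mu>(1)] by (auto elim!: dvdE simp: mult.commute)
  moreover have "(monom 1 N - 1) ^ degree \<mu> = [:-1, 1:] ^ degree \<mu> \<circ>\<^sub>p (monom 1 N :: 'a poly)"
    by (simp add: pcompose_power_left pcompose_X_minus_1)
  ultimately have "[:-1, 1:] ^ degree \<mu> \<in> annihilator h"
    using pcompose_monom_in_annihilator_iff[OF N(1)] by simp
  then have "[:-1, 1:] ^ (card B * card B - degree \<mu>) * [:-1, 1:] ^ degree \<mu> \<in> annihilator h"
    by (rule annihilator_mult)
  with \<mu>(3) show ?thesis
    by (simp flip: power_add)
qed

definition nil_index :: nat where
  "nil_index = card B * card B"

lemma fwd_diff_eq_0:
  assumes "nil_index \<le> k" "g \<in> V"
  shows "fwd_diff k y g = (\<lambda>x. 0)"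
proof -
  have "[:-1, 1:] ^ (k - nil_index) * [:-1, 1:] ^ nil_index \<in> annihilator y"
    unfolding nil_index_def by (intro annihilator_mult X_minus_1_power_in_annihilator)
  then have "[:-1, 1:] ^ k \<in> annihilator y"
    using assms(1) by (simp flip: power_add)
  with assms(2) show ?thesis
    by (simp add: fwd_diff_def annihilator_def)
qed

definition line_poly :: "'a ^ 'n \<Rightarrow> ('a ^ 'n \<Rightarrow> 'a) \<Rightarrow> 'a ^ 'n \<Rightarrow> 'a poly" where
  "line_poly y g x = (\<Sum>k<nil_index. smult (fwd_diff k y g x) (binomial_poly k))"

lemma poly_line_poly:
  assumes "g \<in> V"
  shows "poly (line_poly y g x) (of_nat n) = g (x + of_nat n *s y)"
proof -
  define F where "F k = of_nat (n choose k) * fwd_diff k y g x" for k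
  have "g (x + of_nat n *s y) = (\<Sum>k\<le>n. F k)"
    unfolding F_def by (rule newton_forward_difference)
  also have "\<dots> = (\<Sum>k<Suc n + nil_index. F k)"
    by (rule sum.mono_neutral_left) (auto simp: F_def)
  also have "\<dots> = (\<Sum>k<nil_index. F k)"
    using assms by (intro sum.mono_neutral_right) (auto simp: F_def fwd_diff_eq_0)
  finally show ?thesis
    by (simp add: F_def line_poly_def poly_sum poly_binomial_poly_of_nat mult.commute)
qed

definition line_coeff :: "nat \<Rightarrow> 'a ^ 'n \<Rightarrow> ('a ^ 'n \<Rightarrow> 'a) \<Rightarrow> 'a ^ 'n \<Rightarrow> 'a" where
  "line_coeff j y g x = coeff (line_poly y g x) j"

lemma line_coeff_eq_sum:
  "line_coeff j y g = (\<lambda>x. \<Sum>k<nil_index. coeff (binomial_poly k) j * fwd_diff k y g x)"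
  by (simp add: line_coeff_def line_poly_def coeff_sum mult.commute fun_eq_iff)

lemma line_coeff_in_V: "g \<in> V \<Longrightarrow> line_coeff j y g \<in> V"
  unfolding line_coeff_eq_sum fwd_diff_def by (intro lincomb_in_V poly_transl_in_V)

lemma line_coeff_lincomb:
  "line_coeff j y (\<lambda>x. \<Sum>i\<in>I. c i * G i x) x = (\<Sum>i\<in>I. c i * line_coeff j y (G i) x)"
  by (simp add: line_coeff_eq_sum fwd_diff_def poly_transl_lincomb sum_distrib_left
      sum.swap[of _ I] mult.left_commute)

lemma line_coeff_zero_fun [simp]: "line_coeff j y (\<lambda>x. 0) = (\<lambda>x. 0)"
  by (simp add: line_coeff_eq_sum fwd_diff_def)

lemma line_coeff_eq_0:
  assumes "nil_index \<le> j"
  shows "line_coeff j y g = (\<lambda>x. 0)"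
proof -
  have "coeff (binomial_poly k :: 'a poly) j = 0" if "k < nil_index" for k
  proof (rule coeff_eq_0)
    have "degree (binomial_poly k :: 'a poly) \<le> k"
      by (rule degree_binomial_poly)
    with that assms show "degree (binomial_poly k :: 'a poly) < j"
      by linarith
  qed
  then show ?thesis
    by (simp add: line_coeff_eq_sum)
qed

lemma poly_line_poly_eq_sum: "poly (line_poly y g x) t = (\<Sum>l<nil_index. t ^ l * line_coeff l y g x)"
proof -
  have "poly (line_poly y g x) t = (\<Sum>l\<le>degree (line_poly y g x). t ^ l * line_coeff l y g x)"
    by (simp add: poly_altdef line_coeff_def mult.commute)
  also have "\<dots> = (\<Sum>l<Suc (degree (line_poly y g x)) + nil_index. t ^ l * line_coeff l y g x)"
    by (rule sum.mono_neutral_left) (auto simp: line_coeff_def coeff_eq_0)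
  also have "\<dots> = (\<Sum>l<nil_index. t ^ l * line_coeff l y g x)"
    by (rule sum.mono_neutral_right) (auto simp: line_coeff_eq_0)
  finally show ?thesis .
qed

lemma line_coeff_0: "g \<in> V \<Longrightarrow> line_coeff 0 y g = g"
  using poly_line_poly[of g y _ 0] by (simp add: line_coeff_def poly_0_coeff_0 fun_eq_iff)

text \<open>Both sides are coefficients of the polynomial \<open>n \<mapsto> g (x + n y1 + n y2)\<close>, expanded
  once along \<open>y1 + y2\<close> and once along \<open>y2\<close> and then along \<open>y1\<close>.\<close>
lemma line_coeff_add:
  assumes "g \<in> V"
  shows "line_coeff j (y1 + y2) g x = (\<Sum>l\<le>j. line_coeff (j - l) y1 (line_coeff l y2 g) x)"
proof -
  define R where "R = (\<Sum>l<nil_index. monom 1 l * line_poly y1 (line_coeff l y2 g) x)"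
  have "line_poly (y1 + y2) g x = R"
  proof (rule poly_eqI_of_nat)
    fix n
    have "poly (line_poly (y1 + y2) g x) (of_nat n) = g ((x + of_nat n *s y1) + of_nat n *s y2)"
      using assms by (simp add: poly_line_poly vector_add_ldistrib add.assoc)
    also have "\<dots> = (\<Sum>l<nil_index. of_nat n ^ l * line_coeff l y2 g (x + of_nat n *s y1))"
      using poly_line_poly[OF assms, of y2 "x + of_nat n *s y1" n] by (simp add: poly_line_poly_eq_sum)
    also have "\<dots> = poly R (of_nat n)"
      using assms by (simp add: R_def poly_sum poly_monom poly_line_poly line_coeff_in_V)
    finally show "poly (line_poly (y1 + y2) g x) (of_nat n) = poly R (of_nat n)" .
  qed
  then have "line_coeff j (y1 + y2) g x
      = (\<Sum>l<nil_index. if l \<le> j then line_coeff (j - l) y1 (line_coeff l y2 g) x else 0)"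
    by (auto simp: line_coeff_def R_def coeff_sum coeff_monom_mult intro!: sum.cong)
  also have "\<dots> = (\<Sum>l<nil_index + Suc j. if l \<le> j then line_coeff (j - l) y1 (line_coeff l y2 g) x else 0)"
    by (rule sum.mono_neutral_left) (auto simp: line_coeff_eq_0)
  also have "\<dots> = (\<Sum>l\<le>j. line_coeff (j - l) y1 (line_coeff l y2 g) x)"
    by (rule sum.mono_neutral_cong_right) auto
  finally show ?thesis .
qed

lemma line_coeff_scale_of_nat:
  assumes "g \<in> V"
  shows "line_coeff j (of_nat m *s y) g x = of_nat m ^ j * line_coeff j y g x"
proof -
  have "line_poly (of_nat m *s y) g x = line_poly y g x \<circ>\<^sub>p [:0, of_nat m:]"
  proof (rule poly_eqI_of_nat)
    fix n
    have "poly (line_poly (of_nat m *s y) g x) (of_nat n) = g (x + of_nat n *s (of_nat m *s y))"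
      using assms by (rule poly_line_poly)
    also have "\<dots> = g (x + of_nat (m * n) *s y)"
      by (simp add: vector_smult_assoc mult.commute)
    also have "\<dots> = poly (line_poly y g x) (of_nat (m * n))"
      using assms by (rule poly_line_poly[symmetric])
    also have "\<dots> = poly (line_poly y g x \<circ>\<^sub>p [:0, of_nat m:]) (of_nat n)"
      by (simp add: poly_pcompose mult.commute)
    finally show "poly (line_poly (of_nat m *s y) g x) (of_nat n)
        = poly (line_poly y g x \<circ>\<^sub>p [:0, of_nat m:]) (of_nat n)" .
  qed
  then show ?thesis
    by (simp add: line_coeff_def coeff_pcompose_linear)
qed

lemma line_coeff_1_add:
  assumes "g \<in> V"
  shows "line_coeff 1 (y1 + y2) g = (\<lambda>x. line_coeff 1 y1 g x + line_coeff 1 y2 g x)"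
  using line_coeff_add[OF assms, of 1] assms
  by (simp add: fun_eq_iff line_coeff_0 line_coeff_in_V)

lemma line_coeff_recursion:
  assumes "g \<in> V" "0 < j"
  shows "(2 ^ j - 2) * line_coeff j y g x = (\<Sum>l\<in>{1..<j}. line_coeff (j - l) y (line_coeff l y g) x)"
    (is "_ = ?S")
proof -
  have "y + y = of_nat 2 *s y"
    by (simp add: vec_eq_iff)
  then have "of_nat 2 ^ j * line_coeff j y g x = line_coeff j (y + y) g x"
    by (simp only: line_coeff_scale_of_nat[OF assms(1)])
  also have "\<dots> = (\<Sum>l\<le>j. line_coeff (j - l) y (line_coeff l y g) x)"
    by (rule line_coeff_add[OF assms(1)])
  also have "{..j} = insert 0 (insert j {1..<j})"
    using assms(2) by auto
  also have "(\<Sum>l\<in>insert 0 (insert j {1..<j}). line_coeff (j - l) y (line_coeff l y g) x)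
      = 2 * line_coeff j y g x + ?S"
    using assms by (simp add: line_coeff_0 line_coeff_in_V)
  finally show ?thesis
    by (simp add: algebra_simps)
qed

definition coord :: "('a ^ 'n \<Rightarrow> 'a) \<Rightarrow> ('a ^ 'n \<Rightarrow> 'a) \<Rightarrow> 'a" where
  "coord b g = fun_space.representation B g b"

lemma coord_expansion: "g \<in> V \<Longrightarrow> g = (\<lambda>x. \<Sum>b\<in>B. coord b g * b x)"
  using fun_space.sum_representation_eq[OF independent_B _ finite_B subset_refl, of g] span_B
  by (simp add: coord_def sum_fun_eq)

lemma coord_add:
  "g1 \<in> V \<Longrightarrow> g2 \<in> V \<Longrightarrow> coord b (\<lambda>x. g1 x + g2 x) = coord b g1 + coord b g2"
  using fun_space.representation_add[OF independent_B, of g2 g1] span_B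
  by (simp add: coord_def plus_fun_def)

lemma coord_scale: "g \<in> V \<Longrightarrow> coord b (\<lambda>x. c * g x) = c * coord b g"
  using fun_space.representation_scale[OF independent_B, of g c] span_B
  by (simp add: coord_def)

lemma coord_sum:
  "(\<And>i. i \<in> I \<Longrightarrow> G i \<in> V) \<Longrightarrow> coord b (\<lambda>x. \<Sum>i\<in>I. G i x) = (\<Sum>i\<in>I. coord b (G i))"
  using fun_space.representation_sum[OF independent_B, of I G] span_B
  by (simp add: coord_def sum_fun_eq)

lemma coord_line_coeff:
  assumes "u \<in> V"
  shows "coord b (line_coeff i y u) = (\<Sum>b'\<in>B. coord b' u * coord b (line_coeff i y b'))"
proof -
  have "line_coeff i y u = (\<lambda>x. \<Sum>b'\<in>B. coord b' u * line_coeff i y b' x)"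
    by (subst coord_expansion[OF assms]) (simp add: line_coeff_lincomb fun_eq_iff)
  then have "coord b (line_coeff i y u) = (\<Sum>b'\<in>B. coord b (\<lambda>x. coord b' u * line_coeff i y b' x))"
    by (simp only:) (intro coord_sum scale_in_V line_coeff_in_V basis_in_V)
  then show ?thesis
    by (simp add: coord_scale line_coeff_in_V basis_in_V)
qed

lemma coord_line_coeff_recursion:
  assumes "g \<in> V" "0 < j"
  shows "(2 ^ j - 2) * coord b (line_coeff j y g)
    = (\<Sum>l\<in>{1..<j}. \<Sum>b'\<in>B. coord b' (line_coeff l y g) * coord b (line_coeff (j - l) y b'))"
proof -
  have "(2 ^ j - 2) * coord b (line_coeff j y g) = coord b (\<lambda>x. (2 ^ j - 2) * line_coeff j y g x)"
    using assms(1) by (simp add: coord_scale line_coeff_in_V)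
  also have "\<dots> = coord b (\<lambda>x. \<Sum>l\<in>{1..<j}. line_coeff (j - l) y (line_coeff l y g) x)"
    using line_coeff_recursion[OF assms] by simp
  also have "\<dots> = (\<Sum>l\<in>{1..<j}. coord b (line_coeff (j - l) y (line_coeff l y g)))"
    using assms(1) by (simp add: coord_sum line_coeff_in_V)
  finally show ?thesis
    using assms(1) by (simp add: coord_line_coeff line_coeff_in_V)
qed

lemma normal_poly_coord_line_coeff:
  assumes "g \<in> V"
  shows "normal_poly (\<lambda>y. coord b (line_coeff j y g))"
  using assms
proof (induction j arbitrary: g b rule: less_induct)
  case (less j)
  consider "j = 0" | "j = 1" | "2 \<le> j"
    by linarith
  then show ?case
  proof cases
    case 1
    then show ?thesis
      using less.prems by (simp add: line_coeff_0 np_const)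
  next
    case 2
    have "coord b (line_coeff 1 (y1 + y2) g) = coord b (line_coeff 1 y1 g) + coord b (line_coeff 1 y2 g)"
      for y1 y2
      unfolding line_coeff_1_add[OF less.prems] using less.prems by (intro coord_add line_coeff_in_V)
    then have "additive_fun (\<lambda>y. coord b (line_coeff 1 y g))"
      by (simp add: additive_fun_def)
    with 2 show ?thesis
      by (simp add: np_additive)
  next
    case 3
    have "(2::'a) ^ j \<noteq> 2"
    proof -
      have "(2::nat) ^ j \<noteq> 2"
        using 3 power_increasing[of 2 j "2::nat"] by auto
      then show ?thesis
        by (metis of_nat_eq_iff of_nat_numeral of_nat_power)
    qed
    then have "coord b (line_coeff j y g)
        = inverse (2 ^ j - 2) * (\<Sum>l\<in>{1..<j}. \<Sum>b'\<in>B.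
            coord b' (line_coeff l y g) * coord b (line_coeff (j - l) y b'))"
      for y
      using coord_line_coeff_recursion[OF less.prems, of j b y] 3 by (simp add: field_simps)
    moreover have "normal_poly (\<lambda>y. inverse (2 ^ j - 2) * (\<Sum>l\<in>{1..<j}. \<Sum>b'\<in>B.
        coord b' (line_coeff l y g) * coord b (line_coeff (j - l) y b')))"
      using less.prems 3 basis_in_V finite_B
      by (intro np_mult np_const normal_poly_sum finite_atLeastLessThan less.IH) auto
    ultimately show ?thesis
      by simp
  qed
qed

lemma normal_poly_if_in_V:
  assumes "f \<in> V"
  shows "normal_poly f"
proof -
  have "f = (\<lambda>y. \<Sum>l<nil_index. \<Sum>b\<in>B. coord b (line_coeff l y f) * b 0)"
  proof
    fix y
    have "f y = poly (line_poly y f 0) (of_nat 1)"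
      using poly_line_poly[OF assms, of y 0 1] by simp
    also have "\<dots> = (\<Sum>l<nil_index. line_coeff l y f 0)"
      by (simp add: poly_line_poly_eq_sum)
    also have "\<dots> = (\<Sum>l<nil_index. \<Sum>b\<in>B. coord b (line_coeff l y f) * b 0)"
      using fun_cong[OF coord_expansion[OF line_coeff_in_V[OF assms]]] by simp
    finally show "f y = (\<Sum>l<nil_index. \<Sum>b\<in>B. coord b (line_coeff l y f) * b 0)" .
  qed
  moreover have "normal_poly (\<lambda>y. \<Sum>l<nil_index. \<Sum>b\<in>B. coord b (line_coeff l y f) * b 0)"
    using assms finite_B
    by (intro normal_poly_sum np_mult np_const normal_poly_coord_line_coeff finite_lessThan) auto
  ultimately show ?thesis
    by simp
qed

end

theorem mainTheorem15:
  fixes V :: "('a::field_char_0 ^ 'n \<Rightarrow> 'a) set" and f :: "'a ^ 'n \<Rightarrow> 'a"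
  assumes "fin_dim_fun_space V"
    and "\<And>h g. g \<in> V \<Longrightarrow> transl h g \<in> V"
    and "\<And>P g. invertible P \<Longrightarrow> g \<in> V \<Longrightarrow> lin_change P g \<in> V"
    and "f \<in> V"
  shows "normal_poly f"
proof -
  obtain B where "finite B" "fun_space.independent B" "fun_space.span B = V"
    using fin_dim_fun_space_imp_basis[OF assms(1)] by blast
  then interpret transl_dilation_invariant V B
  proof unfold_locales
    show "(\<lambda>x. g (x + h)) \<in> V" if "g \<in> V" for h g
      using assms(2)[OF that] by (simp add: transl_def)
    show "(\<lambda>x. g (c *s x)) \<in> V" if "c \<noteq> 0" "g \<in> V" for c g
      using assms(3)[OF invertible_mat[OF that(1)] that(2)]
      by (simp add: lin_change_def matrix_vector_mult_mat)
  qed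
  show ?thesis
    using normal_poly_if_in_V assms(4) .
qed

end
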